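(* Let $S$ be a finite non-empty set and $\Sigma\subseteq\mathbb{R}_+\times S$ locally finite, and let $(X_n,\eta_n)$ be a time-homogeneous irreducible Markov chain on $\Sigma$ such that every line $\Lambda_k=\{x:(x,k)\in\Sigma\}$ is unbounded. Suppose that for some $p>2$ there is $C_p<\infty$ with $\mathbb{E}_{x,i}[|X_{n+1}-X_n|^p]\le C_p$ for all $(x,i)\in\Sigma$; that $q_{ij}(x)\to q_{ij}$ as $x\to\infty$ with $(q_{ij})$ an irreducible stochastic matrix; and that there exist $c_i\in\mathbb{R}$, $s_i^2\ge0$ (at least one $s_i^2\ne0$) with $\mu_i(x)=c_i/x+o(x^{-1})$ and $\sigma_i^2(x)=s_i^2+o(1)$ as $x\to\infty$. Let $b_i\in\mathbb{R}$, $i\in S$, let $\nu\in(0,p]$, let $f_\nu$ be as in the context, and set $Z_n:=(f_\nu(X_n,\eta_n))^{1/\nu}$. Then, as $x\to\infty$, \[\mathbb{E}_{x,i}[Z_{n+1}-Z_n]=\frac{c_i}x+\frac1{2x}\sum_{j\in S}(b_j-b_i)q_{ij}+o(x^{-1}),\] and there is a constant $B<\infty$ such that $\mathbb{E}_{x,i}[(Z_{n+1}-Z_n)^2]\le B$.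
   Context: Locally finite means $\Sigma\cap([0,r]\times S)$ is finite for every $r\ge0$. $\mathbb{E}_{x,i}[\cdot]=\mathbb{E}[\cdot\mid X_n=x,\eta_n=i]$; $q_{ij}(x)=\Pr[\eta_{n+1}=j\mid X_n=x,\eta_n=i]$; $\mu_i(x)=\mathbb{E}_{x,i}[X_{n+1}-X_n]$; $\sigma_i^2(x)=\mathbb{E}_{x,i}[(X_{n+1}-X_n)^2]$. $x_0:=1+\sqrt{|\nu|\max_i|b_i|}$ and $f_\nu(x,i)=x^\nu+\frac\nu2b_ix^{\nu-2}$ for $x\ge x_0$, $f_\nu(x,i)=x_0^\nu+\frac\nu2b_ix_0^{\nu-2}$ for $x<x_0$ (this is positive). *)

theory Defs
  imports "HOL-Probability.Probability"
begin

text \<open>The Markov chain on \<Sigma> \<subseteq> R_+ \<times> S is encoded by its (time-homogeneous)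
  one-step transition kernel P: P (x,i) is the law of (X_{n+1}, eta_{n+1}) given
  (X_n, eta_n) = (x,i). Since \<Sigma> is locally finite it is countable, so pmfs suffice.\<close>

definition locally_finite :: "(real \<times> 'a) set \<Rightarrow> 'a set \<Rightarrow> bool" where
  "locally_finite \<Sigma> S \<longleftrightarrow> (\<forall>r\<ge>0. finite (\<Sigma> \<inter> ({0..r} \<times> S)))"

definition line :: "(real \<times> 'a) set \<Rightarrow> 'a \<Rightarrow> real set" where
  "line \<Sigma> k = {x. (x, k) \<in> \<Sigma>}"

definition irreducible_chain :: "(real \<times> 'a) set \<Rightarrow> (real \<times> 'a \<Rightarrow> (real \<times> 'a) pmf) \<Rightarrow> bool" where
  "irreducible_chain \<Sigma> P \<longleftrightarrow>
     (\<forall>u\<in>\<Sigma>. set_pmf (P u) \<subseteq> \<Sigma>) \<and>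
     (\<forall>u\<in>\<Sigma>. \<forall>v\<in>\<Sigma>. (u, v) \<in> {(a, b). a \<in> \<Sigma> \<and> b \<in> set_pmf (P a)}\<^sup>*)"

definition stochastic_matrix :: "'a set \<Rightarrow> ('a \<Rightarrow> 'a \<Rightarrow> real) \<Rightarrow> bool" where
  "stochastic_matrix S Q \<longleftrightarrow> (\<forall>i\<in>S. \<forall>j\<in>S. Q i j \<ge> 0) \<and> (\<forall>i\<in>S. (\<Sum>j\<in>S. Q i j) = 1)"

definition irreducible_matrix :: "'a set \<Rightarrow> ('a \<Rightarrow> 'a \<Rightarrow> real) \<Rightarrow> bool" where
  "irreducible_matrix S Q \<longleftrightarrow>
     (\<forall>i\<in>S. \<forall>j\<in>S. (i, j) \<in> {(a, b). a \<in> S \<and> b \<in> S \<and> Q a b > 0}\<^sup>*)"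

definition ExP :: "(real \<times> 'a \<Rightarrow> (real \<times> 'a) pmf) \<Rightarrow> real \<Rightarrow> 'a \<Rightarrow> (real \<times> 'a \<Rightarrow> real) \<Rightarrow> real" where
  "ExP P x i g = measure_pmf.expectation (P (x, i)) g"

definition qx :: "(real \<times> 'a \<Rightarrow> (real \<times> 'a) pmf) \<Rightarrow> 'a \<Rightarrow> 'a \<Rightarrow> real \<Rightarrow> real" where
  "qx P i j x = measure_pmf.prob (P (x, i)) {u. snd u = j}"

definition mu :: "(real \<times> 'a \<Rightarrow> (real \<times> 'a) pmf) \<Rightarrow> 'a \<Rightarrow> real \<Rightarrow> real" where
  "mu P i x = ExP P x i (\<lambda>u. fst u - x)"

definition sigma2 :: "(real \<times> 'a \<Rightarrow> (real \<times> 'a) pmf) \<Rightarrow> 'a \<Rightarrow> real \<Rightarrow> real" where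
  "sigma2 P i x = ExP P x i (\<lambda>u. (fst u - x)^2)"

definition along :: "(real \<times> 'a) set \<Rightarrow> 'a \<Rightarrow> real filter" where
  "along \<Sigma> i = inf at_top (principal (line \<Sigma> i))"

definition x0 :: "'a set \<Rightarrow> ('a \<Rightarrow> real) \<Rightarrow> real \<Rightarrow> real" where
  "x0 S b \<nu> = 1 + sqrt (\<bar>\<nu>\<bar> * Max ((\<lambda>i. \<bar>b i\<bar>) ` S))"

definition f_nu :: "'a set \<Rightarrow> ('a \<Rightarrow> real) \<Rightarrow> real \<Rightarrow> real \<times> 'a \<Rightarrow> real" where
  "f_nu S b \<nu> u = (let x = fst u; i = snd u; y = (if x \<ge> x0 S b \<nu> then x else x0 S b \<nu>)
                    in y powr \<nu> + \<nu> / 2 * b i * y powr (\<nu> - 2))"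

definition Zf :: "'a set \<Rightarrow> ('a \<Rightarrow> real) \<Rightarrow> real \<Rightarrow> real \<times> 'a \<Rightarrow> real" where
  "Zf S b \<nu> u = (f_nu S b \<nu> u) powr (1 / \<nu>)"

end

theory Submission
  imports Defs "HOL-Library.Landau_Symbols"
begin

text \<open>For x \<ge> x0 one has f_\<nu>(x,j) = x^\<nu> (1 + \<nu> b_j / (2 x^2)), so the second-order Taylor
  expansion of (1 + a)^(1/\<nu>) gives Z(x,j) = x + b_j / (2 x) + O(x^-2) uniformly in j.
  Consequently, from (x,i) the increment of Z is (X' - x) + (b_j' - b_i) / (2 x) up to an error
  O((1 + (X' - x)^2) / x^2): for jumps to X' \<ge> x/2 this is the expansion, and for jumps below x/2
  the error is merely bounded, but there (X' - x)^2 / x^2 \<ge> 1/4. The p-th moment bound controls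
  E (X' - x)^2, so the error has expectation O(x^-2), while the middle term has expectation
  (1 / 2x) \<Sum>_j (b_j - b_i) q_ij(x). The second moment bound follows from
  |Z(x',j) - Z(x,i)| \<le> |x' - x| + const.\<close>

lemma powr_one_plus_second_order:
  fixes r :: real
  obtains C where "C \<ge> 0" "\<And>a. \<bar>a\<bar> \<le> 1/2 \<Longrightarrow> \<bar>(1 + a) powr r - 1 - r * a\<bar> \<le> C * a\<^sup>2"
proof
  define C where "C = \<bar>r * (r - 1)\<bar> / 2 * ((1/2) powr (r - 2) + (3/2) powr (r - 2))"
  show "C \<ge> 0" unfolding C_def by simp
  fix a :: real assume a: "\<bar>a\<bar> \<le> 1/2"
  define d :: "nat \<Rightarrow> real \<Rightarrow> real" where
    "d = (\<lambda>m t. if m = 0 then (1 + t) powr r else if m = 1 then r * (1 + t) powr (r - 1)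
                else r * (r - 1) * (1 + t) powr (r - 2))"
  have "DERIV (d m) t :> d (Suc m) t" if "m < 2" "\<bar>t\<bar> \<le> \<bar>a\<bar>" for m t
  proof -
    have "1 + t > 0" using that a by auto
    moreover have "m = 0 \<or> m = 1" using that by auto
    ultimately show ?thesis
      unfolding d_def by (auto intro!: derivative_eq_intros simp: algebra_simps)
  qed
  then obtain t where t: "\<bar>t\<bar> \<le> \<bar>a\<bar>"
    "(1 + a) powr r = (\<Sum>m<2. d m 0 / fact m * a ^ m) + d 2 t / fact 2 * a\<^sup>2"
    using Maclaurin_bi_le[of d "\<lambda>t. (1 + t) powr r" 2 a] by (auto simp: d_def)
  have remainder: "(1 + a) powr r - 1 - r * a = r * (r - 1) / 2 * (1 + t) powr (r - 2) * a\<^sup>2"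
    using t(2) by (simp add: d_def numeral_2_eq_2 lessThan_Suc)
  have t1: "1/2 \<le> 1 + t" "1 + t \<le> 3/2" using t(1) a by auto
  have "(1 + t) powr (r - 2) \<le> (1/2) powr (r - 2) + (3/2) powr (r - 2)"
  proof (cases "r \<ge> 2")
    case True
    then have "(1 + t) powr (r - 2) \<le> (3/2) powr (r - 2)" using t1 by (intro powr_mono2) auto
    then show ?thesis by (smt (verit) powr_ge_zero)
  next
    case False
    then have "(1 + t) powr (r - 2) \<le> (1/2) powr (r - 2)" using t1 by (intro powr_mono2') auto
    then show ?thesis by (smt (verit) powr_ge_zero)
  qed
  then have "\<bar>r * (r - 1)\<bar> / 2 * (1 + t) powr (r - 2) * a\<^sup>2 \<le> C * a\<^sup>2"
    unfolding C_def by (intro mult_right_mono mult_left_mono) auto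
  then show "\<bar>(1 + a) powr r - 1 - r * a\<bar> \<le> C * a\<^sup>2"
    unfolding remainder by (simp add: abs_mult)
qed

lemma perturbed_power_root_expansion:
  fixes \<nu> M :: real
  assumes \<nu>: "\<nu> > 0" and M: "M \<ge> 0"
  obtains K where "K \<ge> 0"
    "\<And>y \<beta>. \<bar>\<beta>\<bar> \<le> M \<Longrightarrow> y \<ge> 1 + sqrt (\<nu> * M) \<Longrightarrow>
       \<bar>(y powr \<nu> + \<nu> / 2 * \<beta> * y powr (\<nu> - 2)) powr (1 / \<nu>) - y - \<beta> / (2 * y)\<bar> \<le> K / y\<^sup>2"
proof -
  obtain C where C: "C \<ge> 0" "\<And>a. \<bar>a\<bar> \<le> 1/2 \<Longrightarrow> \<bar>(1 + a) powr (1 / \<nu>) - 1 - 1 / \<nu> * a\<bar> \<le> C * a\<^sup>2"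
    using powr_one_plus_second_order[of "1 / \<nu>"] by blast
  show thesis
  proof
    show "C * \<nu>\<^sup>2 * M\<^sup>2 / 4 \<ge> 0" using C(1) by simp
    fix y \<beta> :: real assume \<beta>: "\<bar>\<beta>\<bar> \<le> M" and y: "y \<ge> 1 + sqrt (\<nu> * M)"
    have y1: "y \<ge> 1" using y by (smt (verit) real_sqrt_ge_zero \<nu> M mult_nonneg_nonneg)
    define a where "a = \<nu> * \<beta> / (2 * y\<^sup>2)"
    have "\<nu> * M \<le> y\<^sup>2"
      using y \<nu> M by (smt (verit) mult_nonneg_nonneg power_mono real_sqrt_ge_zero real_sqrt_pow2)
    then have "\<nu> * \<bar>\<beta>\<bar> \<le> y\<^sup>2" using \<beta> \<nu> by (smt (verit) mult_left_mono)
    then have a: "\<bar>a\<bar> \<le> 1/2" using \<nu> y1 by (simp add: a_def abs_mult field_simps)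
    have "y powr \<nu> + \<nu> / 2 * \<beta> * y powr (\<nu> - 2) = y powr \<nu> * (1 + a)"
      using y1 by (simp add: a_def powr_diff powr_numeral field_simps)
    then have root: "(y powr \<nu> + \<nu> / 2 * \<beta> * y powr (\<nu> - 2)) powr (1 / \<nu>) = y * (1 + a) powr (1 / \<nu>)"
      using a y1 \<nu> by (simp add: powr_mult powr_powr)
    have "\<beta> / (2 * y) = y * (1 / \<nu> * a)" using \<nu> y1 by (simp add: a_def field_simps power2_eq_square)
    then have "(y powr \<nu> + \<nu> / 2 * \<beta> * y powr (\<nu> - 2)) powr (1 / \<nu>) - y - \<beta> / (2 * y)
               = y * ((1 + a) powr (1 / \<nu>) - 1 - 1 / \<nu> * a)"
      unfolding root by (simp add: algebra_simps)
    then have "\<bar>(y powr \<nu> + \<nu> / 2 * \<beta> * y powr (\<nu> - 2)) powr (1 / \<nu>) - y - \<beta> / (2 * y)\<bar>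
               = y * \<bar>(1 + a) powr (1 / \<nu>) - 1 - 1 / \<nu> * a\<bar>"
      using y1 by (simp add: abs_mult)
    also have "\<dots> \<le> y * (C * a\<^sup>2)" using C(2)[OF a] y1 by simp
    also have "\<dots> = C * \<nu>\<^sup>2 * \<beta>\<^sup>2 / 4 / y\<^sup>2 / y"
      using y1 by (simp add: a_def field_simps power2_eq_square)
    also have "\<dots> \<le> C * \<nu>\<^sup>2 * M\<^sup>2 / 4 / y\<^sup>2"
    proof -
      have "\<beta>\<^sup>2 \<le> M\<^sup>2" using \<beta> M by (metis abs_le_square_iff abs_of_nonneg)
      then have "C * \<nu>\<^sup>2 * \<beta>\<^sup>2 / 4 / y\<^sup>2 \<le> C * \<nu>\<^sup>2 * M\<^sup>2 / 4 / y\<^sup>2"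
        using C(1) by (intro divide_right_mono mult_left_mono) auto
      moreover have "C * \<nu>\<^sup>2 * \<beta>\<^sup>2 / 4 / y\<^sup>2 / y \<le> C * \<nu>\<^sup>2 * \<beta>\<^sup>2 / 4 / y\<^sup>2"
        using divide_left_mono[of 1 y "C * \<nu>\<^sup>2 * \<beta>\<^sup>2 / 4 / y\<^sup>2"] y1 C(1) by simp
      ultimately show ?thesis by linarith
    qed
    finally show "\<bar>(y powr \<nu> + \<nu> / 2 * \<beta> * y powr (\<nu> - 2)) powr (1 / \<nu>) - y - \<beta> / (2 * y)\<bar>
                  \<le> C * \<nu>\<^sup>2 * M\<^sup>2 / 4 / y\<^sup>2" .
  qed
qed

lemma Max_abs_nonneg:
  fixes b :: "'a \<Rightarrow> real"
  assumes "finite S" "S \<noteq> {}"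
  shows "Max ((\<lambda>i. \<bar>b i\<bar>) ` S) \<ge> 0"
  using assms by (force simp: Max_ge_iff)

lemma x0_ge_one: "finite S \<Longrightarrow> S \<noteq> {} \<Longrightarrow> x0 S b \<nu> \<ge> 1"
  unfolding x0_def using Max_abs_nonneg[of S b] by simp

lemma Zf_expansion:
  assumes S: "finite S" "S \<noteq> {}" and \<nu>: "\<nu> > 0"
  obtains K where "K \<ge> 0" "\<And>x j. j \<in> S \<Longrightarrow>
      \<bar>Zf S b \<nu> (x, j) - max x (x0 S b \<nu>) - b j / (2 * max x (x0 S b \<nu>))\<bar> \<le> K / (max x (x0 S b \<nu>))\<^sup>2"
proof -
  define M where "M = Max ((\<lambda>i. \<bar>b i\<bar>) ` S)"
  obtain K where K: "K \<ge> 0"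
    "\<And>y \<beta>. \<bar>\<beta>\<bar> \<le> M \<Longrightarrow> y \<ge> 1 + sqrt (\<nu> * M) \<Longrightarrow>
       \<bar>(y powr \<nu> + \<nu> / 2 * \<beta> * y powr (\<nu> - 2)) powr (1 / \<nu>) - y - \<beta> / (2 * y)\<bar> \<le> K / y\<^sup>2"
    using perturbed_power_root_expansion[OF \<nu>, of M] Max_abs_nonneg[OF S] unfolding M_def by blast
  show thesis
  proof (rule that[OF K(1)])
    fix x j assume "j \<in> S"
    then have "\<bar>b j\<bar> \<le> M" unfolding M_def using S by simp
    moreover have "Zf S b \<nu> (x, j) = ((max x (x0 S b \<nu>)) powr \<nu>
        + \<nu> / 2 * b j * (max x (x0 S b \<nu>)) powr (\<nu> - 2)) powr (1 / \<nu>)"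
      unfolding Zf_def f_nu_def Let_def by (simp add: max_def)
    moreover have "max x (x0 S b \<nu>) \<ge> 1 + sqrt (\<nu> * M)" using \<nu> by (simp add: x0_def M_def)
    ultimately show "\<bar>Zf S b \<nu> (x, j) - max x (x0 S b \<nu>) - b j / (2 * max x (x0 S b \<nu>))\<bar>
                     \<le> K / (max x (x0 S b \<nu>))\<^sup>2"
      using K(2) by presburger
  qed
qed

lemma abs_le_one_plus_square: "\<bar>t :: real\<bar> \<le> 1 + t\<^sup>2"
  using zero_le_power2[of "\<bar>t\<bar> - 1"] by (simp add: power2_diff)

context
  fixes Z :: "real \<times> 'a \<Rightarrow> real" and S :: "'a set" and b :: "'a \<Rightarrow> real" and X0 K M :: real
  assumes X0: "X0 \<ge> 1" and K: "K \<ge> 0" and M: "M \<ge> 0" and b_bound: "\<And>j. j \<in> S \<Longrightarrow> \<bar>b j\<bar> \<le> M"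
    and expansion: "\<And>x j. j \<in> S \<Longrightarrow>
      \<bar>Z (x, j) - max x X0 - b j / (2 * max x X0)\<bar> \<le> K / (max x X0)\<^sup>2"
begin

lemma expansion_offset_bound:
  assumes "j \<in> S" shows "\<bar>Z (x, j) - max x X0\<bar> \<le> M / 2 + K"
proof -
  have y1: "max x X0 \<ge> 1" using X0 by simp
  have "\<bar>b j\<bar> / (2 * max x X0) \<le> \<bar>b j\<bar> / 2" using y1 by (intro divide_left_mono) auto
  then have "\<bar>b j / (2 * max x X0)\<bar> \<le> \<bar>b j\<bar> / 2" using y1 by (simp add: abs_divide)
  moreover have "K / (max x X0)\<^sup>2 \<le> K"
    using divide_left_mono[of 1 "(max x X0)\<^sup>2" K] y1 K by (simp add: one_le_power)
  ultimately show ?thesis using expansion[OF assms, of x] b_bound[OF assms] by linarith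
qed

lemma expansion_increment_abs_bound:
  assumes "i \<in> S" "j \<in> S" shows "\<bar>Z (x', j) - Z (x, i)\<bar> \<le> \<bar>x' - x\<bar> + (M + 2 * K)"
proof -
  have "\<bar>max x' X0 - max x X0\<bar> \<le> \<bar>x' - x\<bar>" by (simp add: max_def abs_if)
  then show ?thesis
    using expansion_offset_bound[OF assms(1), of x] expansion_offset_bound[OF assms(2), of x'] by linarith
qed

lemma expansion_increment_near:
  assumes i: "i \<in> S" and j: "j \<in> S" and x: "x \<ge> 2 * X0" and x': "x' \<ge> x / 2"
  shows "\<bar>Z (x', j) - Z (x, i) - (x' - x) - (b j - b i) / (2 * x)\<bar> \<le> (M + 5 * K) * (1 + (x' - x)\<^sup>2) / x\<^sup>2"
proof -
  have xpos: "x > 0" and x'pos: "x' > 0" and mx: "max x X0 = x" and mx': "max x' X0 = x'"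
    using x x' X0 by auto
  have "K / x'\<^sup>2 \<le> K / (x / 2)\<^sup>2"
    using x' xpos K by (intro divide_left_mono power_mono mult_pos_pos) auto
  then have e': "\<bar>Z (x', j) - x' - b j / (2 * x')\<bar> \<le> 4 * K / x\<^sup>2"
    using expansion[OF j, of x'] mx' by (simp add: power_divide)
  have e: "\<bar>Z (x, i) - x - b i / (2 * x)\<bar> \<le> K / x\<^sup>2" using expansion[OF i, of x] mx by simp
  have "b j / (2 * x') - b j / (2 * x) = b j * (x - x') / (2 * x' * x)"
    using xpos x'pos by (simp add: field_simps)
  then have "\<bar>b j / (2 * x') - b j / (2 * x)\<bar> = \<bar>b j\<bar> * \<bar>x' - x\<bar> / (2 * x' * x)"
    using xpos x'pos by (simp add: abs_divide abs_mult abs_minus_commute)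
  also have "\<dots> \<le> M * \<bar>x' - x\<bar> / x\<^sup>2"
    using xpos x'pos x' b_bound[OF j] M
    by (intro frac_le mult_right_mono) (auto simp: power2_eq_square)
  finally have b_diff: "\<bar>b j / (2 * x') - b j / (2 * x)\<bar> \<le> M * \<bar>x' - x\<bar> / x\<^sup>2" .
  have "Z (x', j) - Z (x, i) - (x' - x) - (b j - b i) / (2 * x)
        = (Z (x', j) - x' - b j / (2 * x')) - (Z (x, i) - x - b i / (2 * x)) + (b j / (2 * x') - b j / (2 * x))"
    by (simp add: diff_divide_distrib)
  then have "\<bar>Z (x', j) - Z (x, i) - (x' - x) - (b j - b i) / (2 * x)\<bar> \<le> 4 * K / x\<^sup>2 + K / x\<^sup>2 + M * \<bar>x' - x\<bar> / x\<^sup>2"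
    using e e' b_diff by linarith
  also have "\<dots> = (5 * K + M * \<bar>x' - x\<bar>) / x\<^sup>2" by (simp add: add_divide_distrib)
  also have "\<dots> \<le> (M + 5 * K) * (1 + (x' - x)\<^sup>2) / x\<^sup>2"
  proof (intro divide_right_mono)
    have "M * \<bar>x' - x\<bar> \<le> M * (1 + (x' - x)\<^sup>2)"
      using M abs_le_one_plus_square[of "x' - x"] by (rule mult_left_mono[rotated])
    moreover have "5 * K \<le> 5 * K * (1 + (x' - x)\<^sup>2)"
      using mult_nonneg_nonneg[OF K zero_le_power2[of "x' - x"]] by (simp add: distrib_left)
    ultimately show "5 * K + M * \<bar>x' - x\<bar> \<le> (M + 5 * K) * (1 + (x' - x)\<^sup>2)"
      by (simp add: distrib_right)
  qed simp
  finally show ?thesis .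
qed

lemma expansion_increment_far:
  assumes i: "i \<in> S" and j: "j \<in> S" and x: "x \<ge> X0" and x'0: "x' \<ge> 0" and x': "x' < x / 2"
  shows "\<bar>Z (x', j) - Z (x, i) - (x' - x) - (b j - b i) / (2 * x)\<bar>
         \<le> 4 * (X0 + 2 * M + 2 * K) * (1 + (x' - x)\<^sup>2) / x\<^sup>2"
proof -
  define W where "W = X0 + 2 * M + 2 * K"
  have x1: "x \<ge> 1" and W0: "W \<ge> 0" using x X0 M K by (auto simp: W_def)
  have "\<bar>b j - b i\<bar> / (2 * x) \<le> 2 * M / (2 * 1)"
    using b_bound[OF i] b_bound[OF j] x1 by (intro frac_le) auto
  then have "\<bar>(b j - b i) / (2 * x)\<bar> \<le> M" using x1 by (simp add: abs_divide)
  moreover have "\<bar>max x' X0 - x'\<bar> \<le> X0" using x'0 X0 by (simp add: max_def)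
  moreover have "Z (x', j) - Z (x, i) - (x' - x) - (b j - b i) / (2 * x)
        = (Z (x', j) - max x' X0) + (max x' X0 - x') - (Z (x, i) - max x X0) - (b j - b i) / (2 * x)"
    using x by simp
  ultimately have "\<bar>Z (x', j) - Z (x, i) - (x' - x) - (b j - b i) / (2 * x)\<bar> \<le> W"
    using expansion_offset_bound[OF i, of x] expansion_offset_bound[OF j, of x'] unfolding W_def by linarith
  also have "W \<le> 4 * W * (1 + (x' - x)\<^sup>2) / x\<^sup>2"
  proof -
    have "x \<le> 2 * \<bar>x' - x\<bar>" using x' by (simp add: abs_if)
    then have "x\<^sup>2 \<le> 4 * (x' - x)\<^sup>2" using x1 power_mono[of x "2 * \<bar>x' - x\<bar>" 2] by simp
    also have "\<dots> \<le> 4 * (1 + (x' - x)\<^sup>2)" by simp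
    finally have "W * x\<^sup>2 \<le> 4 * W * (1 + (x' - x)\<^sup>2)"
      using W0 mult_left_mono[of "x\<^sup>2" "4 * (1 + (x' - x)\<^sup>2)" W] by (simp add: algebra_simps)
    then show ?thesis using x1 by (simp add: le_divide_eq)
  qed
  finally show ?thesis unfolding W_def .
qed

lemma expansion_increment_bound:
  obtains C where "C \<ge> 0" "\<And>x x' i j. i \<in> S \<Longrightarrow> j \<in> S \<Longrightarrow> x \<ge> 2 * X0 \<Longrightarrow> (x' :: real) \<ge> 0 \<Longrightarrow>
    \<bar>Z (x', j) - Z (x, i) - (x' - x) - (b j - b i) / (2 * x)\<bar> \<le> C * (1 + (x' - x)\<^sup>2) / x\<^sup>2"
proof
  define C where "C = 4 * (X0 + 2 * M + 5 * K)"
  show "C \<ge> 0" using X0 M K by (simp add: C_def)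
  fix x x' :: real and i j assume ij: "i \<in> S" "j \<in> S" and x: "x \<ge> 2 * X0" and x'0: "x' \<ge> 0"
  have x2: "x\<^sup>2 > 0" using x X0 by simp
  have "M + 5 * K \<le> C" "4 * (X0 + 2 * M + 2 * K) \<le> C" using X0 M K by (auto simp: C_def)
  then have "(M + 5 * K) * (1 + (x' - x)\<^sup>2) / x\<^sup>2 \<le> C * (1 + (x' - x)\<^sup>2) / x\<^sup>2"
        "4 * (X0 + 2 * M + 2 * K) * (1 + (x' - x)\<^sup>2) / x\<^sup>2 \<le> C * (1 + (x' - x)\<^sup>2) / x\<^sup>2"
    using x2 by (auto intro!: divide_right_mono mult_right_mono)
  moreover have "x \<ge> X0" using x X0 by simp
  ultimately show "\<bar>Z (x', j) - Z (x, i) - (x' - x) - (b j - b i) / (2 * x)\<bar> \<le> C * (1 + (x' - x)\<^sup>2) / x\<^sup>2"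
    using expansion_increment_near[OF ij x] expansion_increment_far[OF ij _ x'0]
    by (cases "x' \<ge> x / 2") (force, fastforce)
qed

end


lemma square_le_one_plus_abs_powr:
  fixes t p :: real assumes "p \<ge> 2" shows "t\<^sup>2 \<le> 1 + \<bar>t\<bar> powr p"
proof (cases "\<bar>t\<bar> \<le> 1")
  case True
  then have "t\<^sup>2 \<le> 1" by (simp add: abs_square_le_1)
  then show ?thesis by (smt (verit) powr_ge_zero)
next
  case False
  then have "t\<^sup>2 \<le> \<bar>t\<bar> powr p" using assms powr_mono[of 2 p "\<bar>t\<bar>"] by (simp add: powr_numeral)
  then show ?thesis by simp
qed

lemma pmf_square_moment_le:
  fixes N :: "'b pmf" and f :: "'b \<Rightarrow> real"
  assumes p: "p \<ge> 2" and int: "integrable N (\<lambda>u. \<bar>f u\<bar> powr p)"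
  shows "integrable N (\<lambda>u. (f u)\<^sup>2)"
    and "measure_pmf.expectation N (\<lambda>u. (f u)\<^sup>2) \<le> 1 + measure_pmf.expectation N (\<lambda>u. \<bar>f u\<bar> powr p)"
proof -
  have int1: "integrable N (\<lambda>u. 1 + \<bar>f u\<bar> powr p)" using int by simp
  show int2: "integrable N (\<lambda>u. (f u)\<^sup>2)"
    by (rule Bochner_Integration.integrable_bound[OF int1]) (auto simp: square_le_one_plus_abs_powr[OF p])
  have "measure_pmf.expectation N (\<lambda>u. (f u)\<^sup>2) \<le> measure_pmf.expectation N (\<lambda>u. 1 + \<bar>f u\<bar> powr p)"
    by (intro integral_mono int1 int2 square_le_one_plus_abs_powr[OF p])
  also have "\<dots> = 1 + measure_pmf.expectation N (\<lambda>u. \<bar>f u\<bar> powr p)"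
    using int by (simp add: measure_pmf.prob_space)
  finally show "measure_pmf.expectation N (\<lambda>u. (f u)\<^sup>2) \<le> 1 + measure_pmf.expectation N (\<lambda>u. \<bar>f u\<bar> powr p)" .
qed

lemma pmf_expectation_snd:
  fixes N :: "('b \<times> 'a) pmf" and h :: "'a \<Rightarrow> real"
  assumes "finite S" and "\<And>u. u \<in> set_pmf N \<Longrightarrow> snd u \<in> S"
  shows "integrable N (\<lambda>u. h (snd u))"
    and "measure_pmf.expectation N (\<lambda>u. h (snd u)) = (\<Sum>j\<in>S. h j * measure_pmf.prob N {u. snd u = j})"
proof -
  have supp: "set_pmf (map_pmf snd N) \<subseteq> S" using assms(2) by auto
  then have "integrable (map_pmf snd N) h"
    using assms(1) by (intro integrable_measure_pmf_finite) (rule finite_subset)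
  then show "integrable N (\<lambda>u. h (snd u))" by simp
  have "measure_pmf.expectation N (\<lambda>u. h (snd u)) = measure_pmf.expectation (map_pmf snd N) h" by simp
  also have "\<dots> = (\<Sum>j\<in>S. h j * pmf (map_pmf snd N) j)"
    using supp assms(1) by (intro integral_measure_pmf_real) auto
  also have "\<dots> = (\<Sum>j\<in>S. h j * measure_pmf.prob N {u. snd u = j})"
    by (simp add: pmf_map vimage_def)
  finally show "measure_pmf.expectation N (\<lambda>u. h (snd u)) = (\<Sum>j\<in>S. h j * measure_pmf.prob N {u. snd u = j})" .
qed

lemma pmf_drift_expansion:
  fixes N :: "('b \<times> 'a) pmf" and Y D :: "'b \<times> 'a \<Rightarrow> real" and h :: "'a \<Rightarrow> real"
  assumes S: "finite S" "\<And>u. u \<in> set_pmf N \<Longrightarrow> snd u \<in> S"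
    and D2: "integrable N (\<lambda>u. (D u)\<^sup>2)"
    and R: "\<And>u. u \<in> set_pmf N \<Longrightarrow> \<bar>Y u - D u - h (snd u)\<bar> \<le> C * (1 + (D u)\<^sup>2)"
  shows "\<bar>measure_pmf.expectation N Y - measure_pmf.expectation N D
           - (\<Sum>j\<in>S. h j * measure_pmf.prob N {u. snd u = j})\<bar>
         \<le> C * (1 + measure_pmf.expectation N (\<lambda>u. (D u)\<^sup>2))"
proof -
  let ?E = "measure_pmf.expectation N"
  define Rem where "Rem u = Y u - D u - h (snd u)" for u
  have intB: "integrable N (\<lambda>u. C * (1 + (D u)\<^sup>2))" using D2 by simp
  have intR: "integrable N Rem"
    by (rule Bochner_Integration.integrable_bound[OF intB])
       (auto simp: AE_measure_pmf_iff Rem_def intro: order_trans[OF R abs_ge_self])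
  have intD: "integrable N D"
    by (rule Bochner_Integration.integrable_bound[of _ "\<lambda>u. 1 + (D u)\<^sup>2"])
       (use D2 abs_le_one_plus_square in auto)
  have intH: "integrable N (\<lambda>u. h (snd u))" using pmf_expectation_snd(1)[OF S] .
  have "?E Y = ?E (\<lambda>u. D u + h (snd u) + Rem u)" by (simp add: Rem_def)
  also have "\<dots> = ?E D + ?E (\<lambda>u. h (snd u)) + ?E Rem" using intD intH intR by simp
  finally have decomp: "?E Y - ?E D - (\<Sum>j\<in>S. h j * measure_pmf.prob N {u. snd u = j}) = ?E Rem"
    using pmf_expectation_snd(2)[OF S, where h = h] by simp
  have "\<bar>?E Rem\<bar> \<le> ?E (\<lambda>u. \<bar>Rem u\<bar>)" by (rule integral_abs_bound)
  also have "\<dots> \<le> ?E (\<lambda>u. C * (1 + (D u)\<^sup>2))"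
    by (intro integral_mono_AE integrable_abs intR intB) (simp add: AE_measure_pmf_iff Rem_def R)
  also have "\<dots> = C * (1 + ?E (\<lambda>u. (D u)\<^sup>2))"
    using D2 by (simp add: measure_pmf.prob_space)
  finally show ?thesis unfolding decomp .
qed

lemma pmf_square_bound:
  fixes N :: "'b pmf" and Y D :: "'b \<Rightarrow> real"
  assumes p: "p \<ge> 2" and int: "integrable N (\<lambda>u. \<bar>D u\<bar> powr p)"
    and Y: "\<And>u. u \<in> set_pmf N \<Longrightarrow> \<bar>Y u\<bar> \<le> \<bar>D u\<bar> + c"
  shows "integrable N (\<lambda>u. (Y u)\<^sup>2)"
    and "measure_pmf.expectation N (\<lambda>u. (Y u)\<^sup>2) \<le> 2 * (1 + measure_pmf.expectation N (\<lambda>u. \<bar>D u\<bar> powr p)) + 2 * c\<^sup>2"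
proof -
  have Y2: "(Y u)\<^sup>2 \<le> 2 * (D u)\<^sup>2 + 2 * c\<^sup>2" if "u \<in> set_pmf N" for u
  proof -
    have "(Y u)\<^sup>2 \<le> (\<bar>D u\<bar> + c)\<^sup>2" using Y[OF that] by (metis abs_ge_zero power2_abs power_mono)
    also have "\<dots> \<le> 2 * (D u)\<^sup>2 + 2 * c\<^sup>2" using zero_le_power2[of "\<bar>D u\<bar> - c"] by (simp add: power2_diff power2_sum)
    finally show ?thesis .
  qed
  have intB: "integrable N (\<lambda>u. 2 * (D u)\<^sup>2 + 2 * c\<^sup>2)" using pmf_square_moment_le(1)[OF p int] by simp
  show intY: "integrable N (\<lambda>u. (Y u)\<^sup>2)"
    by (rule Bochner_Integration.integrable_bound[OF intB])
       (auto simp: AE_measure_pmf_iff intro: Y2 order_trans[OF Y2 abs_ge_self])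
  have "measure_pmf.expectation N (\<lambda>u. (Y u)\<^sup>2) \<le> measure_pmf.expectation N (\<lambda>u. 2 * (D u)\<^sup>2 + 2 * c\<^sup>2)"
    by (intro integral_mono_AE intY intB) (auto simp: AE_measure_pmf_iff intro!: Y2)
  also have "\<dots> = 2 * measure_pmf.expectation N (\<lambda>u. (D u)\<^sup>2) + 2 * c\<^sup>2"
    using pmf_square_moment_le(1)[OF p int] by (simp add: measure_pmf.prob_space)
  also have "\<dots> \<le> 2 * (1 + measure_pmf.expectation N (\<lambda>u. \<bar>D u\<bar> powr p)) + 2 * c\<^sup>2"
    using pmf_square_moment_le(2)[OF p int] by simp
  finally show "measure_pmf.expectation N (\<lambda>u. (Y u)\<^sup>2) \<le> 2 * (1 + measure_pmf.expectation N (\<lambda>u. \<bar>D u\<bar> powr p)) + 2 * c\<^sup>2" .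
qed

lemma Zf_increment_expansion:
  assumes S: "finite S" "S \<noteq> {}" and \<nu>: "\<nu> > 0"
  obtains C where "C \<ge> 0" "\<And>x x' i j. i \<in> S \<Longrightarrow> j \<in> S \<Longrightarrow> x \<ge> 2 * x0 S b \<nu> \<Longrightarrow> x' \<ge> 0 \<Longrightarrow>
    \<bar>Zf S b \<nu> (x', j) - Zf S b \<nu> (x, i) - (x' - x) - (b j - b i) / (2 * x)\<bar> \<le> C * (1 + (x' - x)\<^sup>2) / x\<^sup>2"
proof -
  obtain K where "K \<ge> 0" "\<And>x j. j \<in> S \<Longrightarrow>
      \<bar>Zf S b \<nu> (x, j) - max x (x0 S b \<nu>) - b j / (2 * max x (x0 S b \<nu>))\<bar> \<le> K / (max x (x0 S b \<nu>))\<^sup>2"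
    using Zf_expansion[OF S \<nu>] by blast
  moreover have "\<And>j. j \<in> S \<Longrightarrow> \<bar>b j\<bar> \<le> Max ((\<lambda>i. \<bar>b i\<bar>) ` S)" using S(1) by simp
  ultimately show thesis
    using expansion_increment_bound[OF x0_ge_one[OF S] _ Max_abs_nonneg[OF S]] that by metis
qed

lemma Zf_increment_abs_bound:
  assumes S: "finite S" "S \<noteq> {}" and \<nu>: "\<nu> > 0"
  obtains L where "\<And>x x' i j. i \<in> S \<Longrightarrow> j \<in> S \<Longrightarrow> \<bar>Zf S b \<nu> (x', j) - Zf S b \<nu> (x, i)\<bar> \<le> \<bar>x' - x\<bar> + L"
proof -
  obtain K where "K \<ge> 0" "\<And>x j. j \<in> S \<Longrightarrow>
      \<bar>Zf S b \<nu> (x, j) - max x (x0 S b \<nu>) - b j / (2 * max x (x0 S b \<nu>))\<bar> \<le> K / (max x (x0 S b \<nu>))\<^sup>2"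
    using Zf_expansion[OF S \<nu>] by blast
  moreover have "\<And>j. j \<in> S \<Longrightarrow> \<bar>b j\<bar> \<le> Max ((\<lambda>i. \<bar>b i\<bar>) ` S)" using S(1) by simp
  ultimately show thesis
    using expansion_increment_abs_bound[OF x0_ge_one[OF S] _ Max_abs_nonneg[OF S]] that by metis
qed

lemma smallo_inverse_if_bounded_by_inverse_square:
  fixes g :: "real \<Rightarrow> real"
  assumes F: "F \<le> at_top" and bound: "eventually (\<lambda>x. \<bar>g x\<bar> \<le> A / x\<^sup>2) F"
  shows "g \<in> o[F](\<lambda>x. 1 / x)"
proof -
  from bound have "eventually (\<lambda>x. norm (g x) \<le> \<bar>A\<bar> * norm (1 / x\<^sup>2)) F"
  proof eventually_elim
    fix x assume "\<bar>g x\<bar> \<le> A / x\<^sup>2"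
    moreover have "A / x\<^sup>2 \<le> \<bar>A\<bar> / x\<^sup>2" by (intro divide_right_mono) auto
    ultimately show "norm (g x) \<le> \<bar>A\<bar> * norm (1 / x\<^sup>2)" by simp
  qed
  then have "g \<in> O[F](\<lambda>x. 1 / x\<^sup>2)" by (rule bigoI)
  moreover have "(\<lambda>x::real. 1 / x\<^sup>2) \<in> o[at_top](\<lambda>x. 1 / x)"
  proof (rule smalloI_tendsto)
    have "((\<lambda>x::real. inverse x) \<longlongrightarrow> 0) at_top" by (rule tendsto_inverse_0_at_top[OF filterlim_ident])
    moreover have "eventually (\<lambda>x::real. inverse x = 1 / x\<^sup>2 / (1 / x)) at_top"
      using eventually_gt_at_top[of 0] by eventually_elim (simp add: field_simps power2_eq_square)
    ultimately show "((\<lambda>x::real. 1 / x\<^sup>2 / (1 / x)) \<longlongrightarrow> 0) at_top" by (rule Lim_transform_eventually)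
    show "eventually (\<lambda>x::real. 1 / x \<noteq> 0) at_top" using eventually_gt_at_top[of 0] by eventually_elim simp
  qed
  then have "(\<lambda>x::real. 1 / x\<^sup>2) \<in> o[F](\<lambda>x. 1 / x)" using F by (rule landau_o.small.filter_mono[rotated])
  ultimately show ?thesis by (rule landau_o.big_small_trans)
qed

lemma smallo_inverse_if_tendsto_zero:
  fixes h :: "real \<Rightarrow> real"
  assumes F: "F \<le> at_top" and h: "(h \<longlongrightarrow> 0) F"
  shows "(\<lambda>x. h x / x) \<in> o[F](\<lambda>x. 1 / x)"
proof (rule smalloI_tendsto)
  have pos: "eventually (\<lambda>x. x > 0) F" using F by (rule filter_leD) (rule eventually_gt_at_top)
  show "((\<lambda>x. h x / x / (1 / x)) \<longlongrightarrow> 0) F"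
    using h by (rule Lim_transform_eventually) (use pos in \<open>eventually_elim, simp\<close>)
  show "eventually (\<lambda>x. 1 / x \<noteq> 0) F" using pos by eventually_elim simp
qed

lemma along_le_at_top: "along \<Sigma> i \<le> at_top"
  by (simp add: along_def)


lemma Zf_increment_second_moment:
  fixes P :: "real \<times> 'a \<Rightarrow> (real \<times> 'a) pmf"
  assumes S: "finite S" "S \<noteq> {}" and \<nu>: "\<nu> > 0" and p: "p \<ge> 2"
    and \<Sigma>: "\<Sigma> \<subseteq> {0..} \<times> S" and closed: "\<forall>u\<in>\<Sigma>. set_pmf (P u) \<subseteq> \<Sigma>"
    and mom: "\<forall>(x, i)\<in>\<Sigma>. integrable (measure_pmf (P (x, i))) (\<lambda>u. \<bar>fst u - x\<bar> powr p)
                          \<and> ExP P x i (\<lambda>u. \<bar>fst u - x\<bar> powr p) \<le> Cp"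
  shows "\<exists>B. \<forall>(x, i)\<in>\<Sigma>.
           integrable (measure_pmf (P (x, i))) (\<lambda>u. (Zf S b \<nu> u - Zf S b \<nu> (x, i))\<^sup>2)
         \<and> ExP P x i (\<lambda>u. (Zf S b \<nu> u - Zf S b \<nu> (x, i))\<^sup>2) \<le> B"
proof -
  obtain L where L: "\<And>x x' i j. i \<in> S \<Longrightarrow> j \<in> S \<Longrightarrow> \<bar>Zf S b \<nu> (x', j) - Zf S b \<nu> (x, i)\<bar> \<le> \<bar>x' - x\<bar> + L"
    using Zf_increment_abs_bound[OF S \<nu>] by blast
  have snd_in: "snd u \<in> S" if "u \<in> \<Sigma>" for u using \<Sigma> that by (auto simp: mem_Times_iff)
  show ?thesis
  proof (intro exI[of _ "2 * (1 + Cp) + 2 * L\<^sup>2"] ballI, clarify)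
    fix x i assume xi: "(x, i) \<in> \<Sigma>"
    have "\<bar>Zf S b \<nu> u - Zf S b \<nu> (x, i)\<bar> \<le> \<bar>fst u - x\<bar> + L" if "u \<in> set_pmf (P (x, i))" for u
      using L[where x = x and x' = "fst u" and i = i and j = "snd u"] snd_in[OF xi] snd_in[OF subsetD[OF closed[rule_format, OF xi] that]]
      by simp
    from pmf_square_bound[OF p _ this] mom xi
    show "integrable (measure_pmf (P (x, i))) (\<lambda>u. (Zf S b \<nu> u - Zf S b \<nu> (x, i))\<^sup>2)
          \<and> ExP P x i (\<lambda>u. (Zf S b \<nu> u - Zf S b \<nu> (x, i))\<^sup>2) \<le> 2 * (1 + Cp) + 2 * L\<^sup>2"
      unfolding ExP_def by fastforce
  qed
qed

lemma Zf_drift_bound: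
  fixes P :: "real \<times> 'a \<Rightarrow> (real \<times> 'a) pmf"
  assumes S: "finite S" "S \<noteq> {}" and \<nu>: "\<nu> > 0" and p: "p \<ge> 2"
    and \<Sigma>: "\<Sigma> \<subseteq> {0..} \<times> S" and closed: "\<forall>u\<in>\<Sigma>. set_pmf (P u) \<subseteq> \<Sigma>"
    and mom: "\<forall>(x, i)\<in>\<Sigma>. integrable (measure_pmf (P (x, i))) (\<lambda>u. \<bar>fst u - x\<bar> powr p)
                          \<and> ExP P x i (\<lambda>u. \<bar>fst u - x\<bar> powr p) \<le> Cp"
  obtains A where "\<And>x i. (x, i) \<in> \<Sigma> \<Longrightarrow> x \<ge> 2 * x0 S b \<nu> \<Longrightarrow>
    \<bar>ExP P x i (\<lambda>u. Zf S b \<nu> u - Zf S b \<nu> (x, i)) - mu P i x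
       - 1 / (2 * x) * (\<Sum>j\<in>S. (b j - b i) * qx P i j x)\<bar> \<le> A / x\<^sup>2"
proof -
  obtain C where C: "C \<ge> 0" "\<And>x x' i j. i \<in> S \<Longrightarrow> j \<in> S \<Longrightarrow> x \<ge> 2 * x0 S b \<nu> \<Longrightarrow> x' \<ge> 0 \<Longrightarrow>
      \<bar>Zf S b \<nu> (x', j) - Zf S b \<nu> (x, i) - (x' - x) - (b j - b i) / (2 * x)\<bar> \<le> C * (1 + (x' - x)\<^sup>2) / x\<^sup>2"
    using Zf_increment_expansion[OF S \<nu>] by blast
  show thesis
  proof (rule that)
    fix x i assume xi: "(x, i) \<in> \<Sigma>" and x: "x \<ge> 2 * x0 S b \<nu>"
    let ?N = "P (x, i)"
    have i: "i \<in> S" using xi \<Sigma> by (auto simp: mem_Times_iff)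
    have states: "snd u \<in> S" "fst u \<ge> 0" if "u \<in> set_pmf ?N" for u
      using subsetD[OF closed[rule_format, OF xi] that] \<Sigma> by (auto simp: mem_Times_iff)
    have int: "integrable ?N (\<lambda>u. \<bar>fst u - x\<bar> powr p)" and Ep: "ExP P x i (\<lambda>u. \<bar>fst u - x\<bar> powr p) \<le> Cp"
      using mom xi by auto
    have "\<bar>Zf S b \<nu> u - Zf S b \<nu> (x, i) - (fst u - x) - (b (snd u) - b i) / (2 * x)\<bar>
          \<le> C / x\<^sup>2 * (1 + (fst u - x)\<^sup>2)" if "u \<in> set_pmf ?N" for u
      using C(2)[OF i states(1)[OF that] x states(2)[OF that]] by simp
    then have "\<bar>ExP P x i (\<lambda>u. Zf S b \<nu> u - Zf S b \<nu> (x, i)) - mu P i x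
                 - (\<Sum>j\<in>S. (b j - b i) / (2 * x) * qx P i j x)\<bar>
               \<le> C / x\<^sup>2 * (1 + ExP P x i (\<lambda>u. (fst u - x)\<^sup>2))"
      unfolding ExP_def mu_def qx_def
      by (intro pmf_drift_expansion[OF S(1) states(1) pmf_square_moment_le(1)[OF p int]])
    moreover have "(\<Sum>j\<in>S. (b j - b i) / (2 * x) * qx P i j x) = 1 / (2 * x) * (\<Sum>j\<in>S. (b j - b i) * qx P i j x)"
      by (simp add: sum_distrib_left)
    moreover have "C / x\<^sup>2 * (1 + ExP P x i (\<lambda>u. (fst u - x)\<^sup>2)) \<le> C / x\<^sup>2 * (2 + Cp)"
      using pmf_square_moment_le(2)[OF p int] Ep C(1) unfolding ExP_def by (intro mult_left_mono) auto
    ultimately show "\<bar>ExP P x i (\<lambda>u. Zf S b \<nu> u - Zf S b \<nu> (x, i)) - mu P i x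
       - 1 / (2 * x) * (\<Sum>j\<in>S. (b j - b i) * qx P i j x)\<bar> \<le> C * (2 + Cp) / x\<^sup>2"
      by simp
  qed
qed

lemma Zf_drift_asymptotics:
  fixes P :: "real \<times> 'a \<Rightarrow> (real \<times> 'a) pmf" and c :: "'a \<Rightarrow> real"
  assumes S: "finite S" "S \<noteq> {}" and \<nu>: "\<nu> > 0" and p: "p \<ge> 2"
    and \<Sigma>: "\<Sigma> \<subseteq> {0..} \<times> S" and closed: "\<forall>u\<in>\<Sigma>. set_pmf (P u) \<subseteq> \<Sigma>"
    and mom: "\<forall>(x, i)\<in>\<Sigma>. integrable (measure_pmf (P (x, i))) (\<lambda>u. \<bar>fst u - x\<bar> powr p)
                          \<and> ExP P x i (\<lambda>u. \<bar>fst u - x\<bar> powr p) \<le> Cp"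
    and i: "i \<in> S"
    and qlim: "\<forall>j\<in>S. (qx P i j \<longlongrightarrow> Q i j) (along \<Sigma> i)"
    and mu: "(\<lambda>x. mu P i x - c i / x) \<in> o[along \<Sigma> i](\<lambda>x. 1 / x)"
  shows "(\<lambda>x. ExP P x i (\<lambda>u. Zf S b \<nu> u - Zf S b \<nu> (x, i))
              - (c i / x + 1 / (2 * x) * (\<Sum>j\<in>S. (b j - b i) * Q i j))) \<in> o[along \<Sigma> i](\<lambda>x. 1 / x)"
proof -
  obtain A where A: "\<And>x i. (x, i) \<in> \<Sigma> \<Longrightarrow> x \<ge> 2 * x0 S b \<nu> \<Longrightarrow>
    \<bar>ExP P x i (\<lambda>u. Zf S b \<nu> u - Zf S b \<nu> (x, i)) - mu P i x
       - 1 / (2 * x) * (\<Sum>j\<in>S. (b j - b i) * qx P i j x)\<bar> \<le> A / x\<^sup>2"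
    using Zf_drift_bound[OF S \<nu> p \<Sigma> closed mom] by blast
  define err where "err x = ExP P x i (\<lambda>u. Zf S b \<nu> u - Zf S b \<nu> (x, i)) - mu P i x
                             - 1 / (2 * x) * (\<Sum>j\<in>S. (b j - b i) * qx P i j x)" for x
  have "eventually (\<lambda>x. (x, i) \<in> \<Sigma> \<and> x \<ge> 2 * x0 S b \<nu>) (along \<Sigma> i)"
    unfolding along_def eventually_inf_principal
    by (rule eventually_mono[OF eventually_ge_at_top]) (auto simp: line_def)
  then have "eventually (\<lambda>x. \<bar>err x\<bar> \<le> A / x\<^sup>2) (along \<Sigma> i)"
    by (rule eventually_mono) (use A in \<open>simp add: err_def\<close>)
  then have "err \<in> o[along \<Sigma> i](\<lambda>x. 1 / x)"
    by (rule smallo_inverse_if_bounded_by_inverse_square[OF along_le_at_top])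
  moreover have "(\<lambda>x. (1 / 2 * (\<Sum>j\<in>S. (b j - b i) * (qx P i j x - Q i j))) / x) \<in> o[along \<Sigma> i](\<lambda>x. 1 / x)"
  proof (rule smallo_inverse_if_tendsto_zero[OF along_le_at_top])
    have "((\<lambda>x. 1 / 2 * (\<Sum>j\<in>S. (b j - b i) * (qx P i j x - Q i j)))
          \<longlongrightarrow> 1 / 2 * (\<Sum>j\<in>S. (b j - b i) * (Q i j - Q i j))) (along \<Sigma> i)"
      using qlim by (intro tendsto_intros) auto
    then show "((\<lambda>x. 1 / 2 * (\<Sum>j\<in>S. (b j - b i) * (qx P i j x - Q i j))) \<longlongrightarrow> 0) (along \<Sigma> i)" by simp
  qed
  ultimately have "(\<lambda>x. (mu P i x - c i / x) + (1 / 2 * (\<Sum>j\<in>S. (b j - b i) * (qx P i j x - Q i j))) / x + err x)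
                   \<in> o[along \<Sigma> i](\<lambda>x. 1 / x)"
    using mu by (intro sum_in_smallo(1))
  also have "(\<lambda>x. (mu P i x - c i / x) + (1 / 2 * (\<Sum>j\<in>S. (b j - b i) * (qx P i j x - Q i j))) / x + err x)
           = (\<lambda>x. ExP P x i (\<lambda>u. Zf S b \<nu> u - Zf S b \<nu> (x, i))
                  - (c i / x + 1 / (2 * x) * (\<Sum>j\<in>S. (b j - b i) * Q i j)))"
  proof
    fix x
    have "(1 / 2 * (\<Sum>j\<in>S. (b j - b i) * (qx P i j x - Q i j))) / x
          = 1 / (2 * x) * (\<Sum>j\<in>S. (b j - b i) * qx P i j x) - 1 / (2 * x) * (\<Sum>j\<in>S. (b j - b i) * Q i j)"
      by (simp add: right_diff_distrib sum_subtractf diff_divide_distrib)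
    then show "(mu P i x - c i / x) + (1 / 2 * (\<Sum>j\<in>S. (b j - b i) * (qx P i j x - Q i j))) / x + err x
             = ExP P x i (\<lambda>u. Zf S b \<nu> u - Zf S b \<nu> (x, i))
                 - (c i / x + 1 / (2 * x) * (\<Sum>j\<in>S. (b j - b i) * Q i j))"
      unfolding err_def by linarith
  qed
  finally show ?thesis .
qed


theorem lemma4p5:
  fixes S :: "'a set" and \<Sigma> :: "(real \<times> 'a) set"
    and P :: "real \<times> 'a \<Rightarrow> (real \<times> 'a) pmf"
    and p Cp \<nu> :: real and Q :: "'a \<Rightarrow> 'a \<Rightarrow> real"
    and c s2 b :: "'a \<Rightarrow> real"
  assumes S: "finite S" "S \<noteq> {}"
    and \<Sigma>: "\<Sigma> \<subseteq> {0..} \<times> S" "locally_finite \<Sigma> S"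
    and irr: "irreducible_chain \<Sigma> P"
    and unb: "\<forall>k\<in>S. \<not> bdd_above (line \<Sigma> k)"
    and p: "p > 2"
    and mom: "\<forall>(x, i)\<in>\<Sigma>. integrable (measure_pmf (P (x, i))) (\<lambda>u. \<bar>fst u - x\<bar> powr p)
                          \<and> ExP P x i (\<lambda>u. \<bar>fst u - x\<bar> powr p) \<le> Cp"
    and qlim: "\<forall>i\<in>S. \<forall>j\<in>S. (qx P i j \<longlongrightarrow> Q i j) (along \<Sigma> i)"
    and Qst: "stochastic_matrix S Q" and Qirr: "irreducible_matrix S Q"
    and s2: "\<forall>i\<in>S. s2 i \<ge> 0" "\<exists>i\<in>S. s2 i \<noteq> 0"
    and muas: "\<forall>i\<in>S. (\<lambda>x. mu P i x - c i / x) \<in> o[along \<Sigma> i](\<lambda>x. 1 / x)"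
    and sigas: "\<forall>i\<in>S. (sigma2 P i \<longlongrightarrow> s2 i) (along \<Sigma> i)"
    and nu: "0 < \<nu>" "\<nu> \<le> p"
  shows "(\<forall>i\<in>S. (\<lambda>x. ExP P x i (\<lambda>u. Zf S b \<nu> u - Zf S b \<nu> (x, i))
                      - (c i / x + 1 / (2 * x) * (\<Sum>j\<in>S. (b j - b i) * Q i j)))
                   \<in> o[along \<Sigma> i](\<lambda>x. 1 / x))
       \<and> (\<exists>B. \<forall>(x, i)\<in>\<Sigma>.
              integrable (measure_pmf (P (x, i))) (\<lambda>u. (Zf S b \<nu> u - Zf S b \<nu> (x, i))^2)
            \<and> ExP P x i (\<lambda>u. (Zf S b \<nu> u - Zf S b \<nu> (x, i))^2) \<le> B)"
proof
  \<comment> \<open>Besides the finiteness of S, only the closedness of \<Sigma> under the chain, the p-th moments, the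
    limits of q_ij(x) and the drift asymptotics are used; the other hypotheses belong to the
    paper's standing assumptions.\<close>
  have closed: "\<forall>u\<in>\<Sigma>. set_pmf (P u) \<subseteq> \<Sigma>" using irr unfolding irreducible_chain_def by blast
  have p2: "p \<ge> 2" using p by simp
  show "\<forall>i\<in>S. (\<lambda>x. ExP P x i (\<lambda>u. Zf S b \<nu> u - Zf S b \<nu> (x, i))
                 - (c i / x + 1 / (2 * x) * (\<Sum>j\<in>S. (b j - b i) * Q i j))) \<in> o[along \<Sigma> i](\<lambda>x. 1 / x)"
    using Zf_drift_asymptotics[OF S nu(1) p2 \<Sigma>(1) closed mom] qlim muas by blast
  show "\<exists>B. \<forall>(x, i)\<in>\<Sigma>.
          integrable (measure_pmf (P (x, i))) (\<lambda>u. (Zf S b \<nu> u - Zf S b \<nu> (x, i))^2)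
        \<and> ExP P x i (\<lambda>u. (Zf S b \<nu> u - Zf S b \<nu> (x, i))^2) \<le> B"
    by (rule Zf_increment_second_moment[OF S nu(1) p2 \<Sigma>(1) closed mom])
qed

end
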